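(* Let $q$ be a prime power, $m\ge1$, and $f_1(t),\ldots,f_m(t)\in\mathbb{F}_q[t]$ pairwise coprime monic irreducible polynomials. Let $R=\mathbb{F}_q[t]$ or $R=\mathbb{F}_q[t,f_1(t)^{-1},\ldots,f_m(t)^{-1}]$. Then there exists a non-unit $x\in R$ that is transcendental over $\mathbb{F}_q$ and satisfies $\sigma(x)=x$ for every ring automorphism $\sigma$ of $R$. *)

theory Defs
  imports "HOL-Computational_Algebra.Polynomial" "HOL-Computational_Algebra.Fraction_Field"
    "HOL-Computational_Algebra.Polynomial_Factorial"
begin

text \<open>We work inside the fraction field Frac(F_q[t]) of the polynomial ring over a
finite field 'a (so q = CARD('a), automatically a prime power).\<close>

definition poly_emb :: "'a::idom poly \<Rightarrow> 'a poly fract" where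
  "poly_emb p = Fract p 1"

definition poly_ring :: "'a::idom poly fract set" where
  "poly_ring = {poly_emb p | p. True}"

definition loc_ring :: "(nat \<Rightarrow> 'a::idom poly) \<Rightarrow> nat \<Rightarrow> 'a poly fract set" where
  "loc_ring f m = {Fract p ((\<Prod>i<m. f i) ^ n) | p n. True}"

definition ring_aut_on :: "'b::ring_1 set \<Rightarrow> ('b \<Rightarrow> 'b) \<Rightarrow> bool" where
  "ring_aut_on S \<sigma> \<longleftrightarrow> bij_betw \<sigma> S S \<and> \<sigma> 1 = 1 \<and>
     (\<forall>a\<in>S. \<forall>b\<in>S. \<sigma> (a + b) = \<sigma> a + \<sigma> b \<and> \<sigma> (a * b) = \<sigma> a * \<sigma> b)"

definition unit_in :: "'b::ring_1 set \<Rightarrow> 'b \<Rightarrow> bool" where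
  "unit_in S x \<longleftrightarrow> (\<exists>y\<in>S. x * y = 1)"

definition transcendental_Fq :: "'a::idom poly fract \<Rightarrow> bool" where
  "transcendental_Fq x \<longleftrightarrow>
     (\<forall>p :: 'a poly. p \<noteq> 0 \<longrightarrow> poly (map_poly (\<lambda>c. poly_emb [:c:]) p) x \<noteq> 0)"

end

theory Submission
  imports Defs
begin

text \<open>
  Write \<open>R = F\<^sub>q[t, 1/D]\<close>, with \<open>D = 1\<close> for \<open>F\<^sub>q[t]\<close> and \<open>D = f\<^sub>1 \<cdots> f\<^sub>m\<close> otherwise.
  A ring automorphism \<open>\<sigma>\<close> of \<open>R\<close> maps constants to constants (the nonzero constants are roots
  of unity, and roots of unity of \<open>F\<^sub>q(t)\<close> are constant), so it is determined by a map
  \<open>\<phi>\<close> on \<open>F\<^sub>q\<close> and by \<open>s = \<sigma> t\<close>: \<open>\<sigma> g = g\<^sup>\<phi>(s)\<close>. Since \<open>t = \<sigma> w\<close> for some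
  \<open>w = g/D\<^sup>n\<close>, we get \<open>t \<cdot> (D\<^sup>n)\<^sup>\<phi>(s) = g\<^sup>\<phi>(s)\<close>, i.e. \<open>t\<close> is a rational function of \<open>s\<close>;
  a degree count after clearing denominators forces \<open>s = (\<alpha>t + \<beta>)/(\<gamma>t + \<delta>)\<close>. Hence every
  polynomial has a finite orbit under the automorphisms of \<open>R\<close>.

  Take \<open>y = tD + 1\<close>, which is coprime to \<open>D\<close> and so not a unit of \<open>R\<close>. The product \<open>x\<close> of
  the orbit of \<open>y\<close> is fixed by every automorphism and is a nonzero non-unit, being divisible
  by \<open>y\<close>. Finally a nonzero non-unit of \<open>R\<close> is transcendental over \<open>F\<^sub>q\<close>: in a minimal
  algebraic relation the constant term is nonzero, and the relation would exhibit an inverse.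
\<close>

section \<open>Automorphism orbits in a subring\<close>

lemma ring_aut_on_id: "ring_aut_on S id"
  by (simp add: ring_aut_on_def)

lemma ring_aut_on_1: "ring_aut_on S \<sigma> \<Longrightarrow> \<sigma> 1 = 1"
  by (simp add: ring_aut_on_def)

lemma ring_aut_on_add: "ring_aut_on S \<sigma> \<Longrightarrow> a \<in> S \<Longrightarrow> b \<in> S \<Longrightarrow> \<sigma> (a + b) = \<sigma> a + \<sigma> b"
  by (simp add: ring_aut_on_def)

lemma ring_aut_on_mult: "ring_aut_on S \<sigma> \<Longrightarrow> a \<in> S \<Longrightarrow> b \<in> S \<Longrightarrow> \<sigma> (a * b) = \<sigma> a * \<sigma> b"
  by (simp add: ring_aut_on_def)

lemma ring_aut_on_mem: "ring_aut_on S \<sigma> \<Longrightarrow> a \<in> S \<Longrightarrow> \<sigma> a \<in> S"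
  unfolding ring_aut_on_def by (blast intro: bij_betw_apply)

lemma ring_aut_on_comp:
  assumes "ring_aut_on S \<sigma>" "ring_aut_on S \<tau>"
  shows "ring_aut_on S (\<sigma> \<circ> \<tau>)"
  using assms by (auto simp: ring_aut_on_def intro: bij_betw_trans bij_betw_apply)

lemma ring_aut_on_inj: "ring_aut_on S \<sigma> \<Longrightarrow> inj_on \<sigma> S"
  by (simp add: ring_aut_on_def bij_betw_def)

lemma ring_aut_on_image: "ring_aut_on S \<sigma> \<Longrightarrow> \<sigma> ` S = S"
  by (simp add: ring_aut_on_def bij_betw_def)

definition aut_orbit :: "'b::comm_ring_1 set \<Rightarrow> 'b \<Rightarrow> 'b set" where
  "aut_orbit S y = {\<sigma> y | \<sigma>. ring_aut_on S \<sigma>}"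

lemma aut_orbitI: "ring_aut_on S \<sigma> \<Longrightarrow> \<sigma> y \<in> aut_orbit S y"
  unfolding aut_orbit_def by blast

lemma mem_aut_orbit_self: "y \<in> aut_orbit S y"
  using aut_orbitI[OF ring_aut_on_id] by simp

locale subring =
  fixes S :: "'b::idom set"
  assumes zero_mem: "0 \<in> S" and one_mem: "1 \<in> S"
    and add_mem: "a \<in> S \<Longrightarrow> b \<in> S \<Longrightarrow> a + b \<in> S"
    and mult_mem: "a \<in> S \<Longrightarrow> b \<in> S \<Longrightarrow> a * b \<in> S"
    and uminus_mem: "a \<in> S \<Longrightarrow> - a \<in> S"
begin

lemma prod_mem: "(\<And>z. z \<in> A \<Longrightarrow> f z \<in> S) \<Longrightarrow> prod f A \<in> S"
  by (induct A rule: infinite_finite_induct) (auto intro: one_mem mult_mem)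

lemma ring_aut_on_0:
  assumes "ring_aut_on S \<sigma>"
  shows "\<sigma> 0 = 0"
proof -
  have "\<sigma> (0 + 0) = \<sigma> 0 + \<sigma> 0"
    using ring_aut_on_add[OF assms zero_mem zero_mem] .
  then show ?thesis
    by (simp only: add_0_right add_cancel_right_right)
qed

lemma ring_aut_on_prod:
  assumes "ring_aut_on S \<sigma>" and "\<And>z. z \<in> A \<Longrightarrow> f z \<in> S"
  shows "\<sigma> (prod f A) = (\<Prod>z\<in>A. \<sigma> (f z))"
  using assms(2)
proof (induct A rule: infinite_finite_induct)
  case (insert z A)
  then show ?case
    using prod_mem[of A f] by (simp add: ring_aut_on_mult[OF assms(1)])
qed (simp_all add: ring_aut_on_1[OF assms(1)])

lemma ring_aut_on_power:
  assumes "ring_aut_on S \<sigma>" and "a \<in> S"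
  shows "\<sigma> (a ^ n) = \<sigma> a ^ n"
  using ring_aut_on_prod[OF assms(1), of "{..<n}" "\<lambda>_. a"] assms(2) by simp

lemma ring_aut_on_inv_into:
  assumes aut: "ring_aut_on S \<sigma>"
  shows "ring_aut_on S (inv_into S \<sigma>)"
  unfolding ring_aut_on_def
proof (intro conjI ballI)
  let ?\<tau> = "inv_into S \<sigma>"
  have inj: "inj_on \<sigma> S" and surj: "\<sigma> ` S = S"
    using aut by (simp_all add: ring_aut_on_inj ring_aut_on_image)
  have \<tau>_mem: "?\<tau> a \<in> S" and \<sigma>_\<tau>: "\<sigma> (?\<tau> a) = a" if "a \<in> S" for a
    using that surj by (auto intro: inv_into_into simp: f_inv_into_f)
  have \<tau>_eqI: "?\<tau> a = u" if "u \<in> S" "\<sigma> u = a" for a u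
    using that inj by (auto simp: inv_into_f_f)
  show "bij_betw ?\<tau> S S"
    using aut by (simp add: ring_aut_on_def bij_betw_inv_into)
  show "?\<tau> 1 = 1"
    using aut one_mem by (intro \<tau>_eqI) (simp_all add: ring_aut_on_def)
  fix a b assume "a \<in> S" "b \<in> S"
  then show "?\<tau> (a + b) = ?\<tau> a + ?\<tau> b" and "?\<tau> (a * b) = ?\<tau> a * ?\<tau> b"
    by (auto intro!: \<tau>_eqI add_mem mult_mem \<tau>_mem
        simp: ring_aut_on_add[OF aut] ring_aut_on_mult[OF aut] \<tau>_mem \<sigma>_\<tau>)
qed

lemma aut_orbit_subset: "y \<in> S \<Longrightarrow> aut_orbit S y \<subseteq> S"
  by (auto simp: aut_orbit_def ring_aut_on_mem)

lemma zero_notin_aut_orbit: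
  assumes "y \<in> S" "y \<noteq> 0"
  shows "0 \<notin> aut_orbit S y"
proof
  assume "0 \<in> aut_orbit S y"
  then obtain \<sigma> where \<sigma>: "ring_aut_on S \<sigma>" "\<sigma> y = \<sigma> 0"
    by (auto simp: aut_orbit_def ring_aut_on_0)
  then show False
    using assms zero_mem ring_aut_on_inj[OF \<sigma>(1)] by (auto dest: inj_onD)
qed

lemma image_aut_orbit:
  assumes \<sigma>: "ring_aut_on S \<sigma>" and "y \<in> S"
  shows "\<sigma> ` aut_orbit S y = aut_orbit S y"
proof
  show "\<sigma> ` aut_orbit S y \<subseteq> aut_orbit S y"
  proof
    fix z assume "z \<in> \<sigma> ` aut_orbit S y"
    then obtain \<tau> where "ring_aut_on S \<tau>" "z = (\<sigma> \<circ> \<tau>) y"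
      by (auto simp: aut_orbit_def)
    then show "z \<in> aut_orbit S y"
      using aut_orbitI ring_aut_on_comp[OF \<sigma>] by metis
  qed
next
  show "aut_orbit S y \<subseteq> \<sigma> ` aut_orbit S y"
  proof
    fix z assume "z \<in> aut_orbit S y"
    then obtain \<tau> where \<tau>: "ring_aut_on S \<tau>" "z = \<tau> y"
      by (auto simp: aut_orbit_def)
    have "z \<in> S"
      using \<tau> \<open>y \<in> S\<close> by (simp add: ring_aut_on_mem)
    then have "z = \<sigma> ((inv_into S \<sigma> \<circ> \<tau>) y)"
      using \<tau>(2) ring_aut_on_image[OF \<sigma>] by (simp add: f_inv_into_f)
    moreover have "(inv_into S \<sigma> \<circ> \<tau>) y \<in> aut_orbit S y"
      using ring_aut_on_comp[OF ring_aut_on_inv_into[OF \<sigma>] \<tau>(1)] by (rule aut_orbitI)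
    ultimately show "z \<in> \<sigma> ` aut_orbit S y" by blast
  qed
qed

lemma prod_aut_orbit_fixed:
  assumes \<sigma>: "ring_aut_on S \<sigma>" and "y \<in> S"
  shows "\<sigma> (\<Prod>(aut_orbit S y)) = \<Prod>(aut_orbit S y)"
proof -
  have sub: "aut_orbit S y \<subseteq> S"
    using \<open>y \<in> S\<close> by (rule aut_orbit_subset)
  then have inj: "inj_on \<sigma> (aut_orbit S y)"
    using ring_aut_on_inj[OF \<sigma>] by (blast intro: inj_on_subset)
  have "\<sigma> (\<Prod>(aut_orbit S y)) = (\<Prod>z\<in>aut_orbit S y. \<sigma> z)"
    using ring_aut_on_prod[OF \<sigma>, of "aut_orbit S y" "\<lambda>z. z"] sub by auto
  also have "\<dots> = \<Prod>(\<sigma> ` aut_orbit S y)"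
    using prod.reindex[OF inj, of "\<lambda>z. z"] by simp
  also have "\<dots> = \<Prod>(aut_orbit S y)"
    by (simp only: image_aut_orbit[OF assms])
  finally show ?thesis .
qed

lemma prod_aut_orbit_nonunit:
  assumes "y \<in> S" "finite (aut_orbit S y)" "\<not> unit_in S y"
  shows "\<not> unit_in S (\<Prod>(aut_orbit S y))"
proof
  let ?O = "aut_orbit S y"
  assume "unit_in S (\<Prod>?O)"
  then obtain v where "v \<in> S" "\<Prod>?O * v = 1"
    by (auto simp: unit_in_def)
  moreover have "\<Prod>?O = y * \<Prod>(?O - {y})"
    using assms(2) mem_aut_orbit_self by (rule prod.remove)
  moreover have "\<Prod>(?O - {y}) \<in> S"
    using aut_orbit_subset[OF assms(1)] by (intro prod_mem) auto
  ultimately have "unit_in S y"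
    unfolding unit_in_def by (metis mult.assoc mult_mem)
  with assms(3) show False ..
qed

lemma fixed_nonunit_if_finite_aut_orbit:
  assumes "y \<in> S" "y \<noteq> 0" "\<not> unit_in S y" "finite (aut_orbit S y)"
  obtains x where "x \<in> S" "x \<noteq> 0" "\<not> unit_in S x" "\<And>\<sigma>. ring_aut_on S \<sigma> \<Longrightarrow> \<sigma> x = x"
proof
  show "\<Prod>(aut_orbit S y) \<in> S"
    using aut_orbit_subset[OF assms(1)] by (intro prod_mem) auto
  show "\<Prod>(aut_orbit S y) \<noteq> 0"
    using assms(4) zero_notin_aut_orbit[OF assms(1,2)] by auto
  show "\<not> unit_in S (\<Prod>(aut_orbit S y))"
    using assms(1,4,3) by (rule prod_aut_orbit_nonunit)
  show "\<sigma> (\<Prod>(aut_orbit S y)) = \<Prod>(aut_orbit S y)" if "ring_aut_on S \<sigma>" for \<sigma>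
    using that assms(1) by (rule prod_aut_orbit_fixed)
qed

end

section \<open>Divisibility and coefficients of polynomials\<close>

lemma euclidean_ring_bezout:
  fixes a b :: "'a::euclidean_ring"
  assumes "coprime a b"
  shows "\<exists>u v. u * a + v * b = 1"
  using assms
proof (induction "euclidean_size b" arbitrary: a b rule: less_induct)
  case less
  show ?case
  proof (cases "b = 0")
    case True
    then have "a dvd 1"
      using less.prems by simp
    then obtain u where "1 = a * u"
      by (rule dvdE)
    then show ?thesis
      by (metis mult.commute mult_zero_left add_0_right)
  next
    case False
    then have "coprime b (a mod b)"
      using less.prems by (simp add: ac_simps)
    then obtain u v where "u * b + v * (a mod b) = 1"
      using less.hyps mod_size_less[OF False] by blast
    moreover have "a mod b = a - a div b * b"
      by (rule minus_div_mult_eq_mod[symmetric])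
    ultimately have "v * a + (u - v * (a div b)) * b = 1"
      by (simp add: algebra_simps)
    then show ?thesis
      by blast
  qed
qed

lemma coprime_dvd_power_imp_unit:
  fixes a b :: "'a::euclidean_ring"
  assumes "coprime a b" "a dvd b ^ k"
  shows "is_unit a"
proof -
  obtain u v where uv: "u * a + v * b = 1"
    using euclidean_ring_bezout[OF assms(1)] by blast
  show ?thesis
    using assms(2)
  proof (induction k)
    case (Suc k)
    have "b ^ k = (u * a + v * b) * b ^ k"
      using uv by simp
    also have "\<dots> = u * a * b ^ k + v * b ^ Suc k"
      by (simp add: algebra_simps)
    finally have "b ^ k = u * a * b ^ k + v * b ^ Suc k" .
    moreover have "a dvd u * a * b ^ k" "a dvd v * b ^ Suc k"
      using Suc.prems by simp_all
    ultimately have "a dvd b ^ k"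
      by (metis dvd_add)
    then show ?case
      by (rule Suc.IH)
  qed simp
qed

lemma poly_common_factor:
  fixes a b :: "'a::field poly"
  assumes "b \<noteq> 0"
  obtains c a' b' where "a = c * a'" "b = c * b'" "coprime a' b'"
  using assms
proof (induction "degree b" arbitrary: a b thesis rule: less_induct)
  case less
  show ?case
  proof (cases "coprime a b")
    case True
    then show ?thesis
      using less.prems(1)[of 1 a b] by simp
  next
    case False
    then obtain d where d: "d dvd a" "d dvd b" "\<not> is_unit d"
      by (auto simp: coprime_def)
    then obtain a1 b1 where ab1: "a = d * a1" "b = d * b1"
      by (auto elim!: dvdE)
    with less.prems(2) d(3) have "degree b1 < degree b"
      by (auto simp: degree_mult_eq is_unit_iff_degree)
    moreover have "b1 \<noteq> 0"
      using ab1 less.prems(2) by auto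
    ultimately obtain c a' b' where "a1 = c * a'" "b1 = c * b'" "coprime a' b'"
      using less.hyps by blast
    then show ?thesis
      using less.prems(1)[of "d * c" a' b'] ab1 by (simp add: mult.assoc)
  qed
qed

lemma coeff_mult_at_degree_bounds:
  fixes p q :: "'a::comm_semiring_1 poly"
  assumes "degree p \<le> m" "degree q \<le> n"
  shows "coeff (p * q) (m + n) = coeff p m * coeff q n"
proof -
  have "coeff (p * q) (m + n) = (\<Sum>i\<le>m + n. coeff p i * coeff q (m + n - i))"
    by (rule coeff_mult)
  also have "\<dots> = (\<Sum>i\<in>{m}. coeff p i * coeff q (m + n - i))"
  proof (rule sum.mono_neutral_right)
    show "\<forall>i\<in>{..m + n} - {m}. coeff p i * coeff q (m + n - i) = 0"
    proof
      fix i assume "i \<in> {..m + n} - {m}"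
      then have "m < i \<or> n < m + n - i"
        by auto
      then show "coeff p i * coeff q (m + n - i) = 0"
        using assms by (auto simp: coeff_eq_0)
    qed
  qed auto
  finally show ?thesis
    by simp
qed

lemma coeff_power_at_degree_bound:
  fixes p :: "'a::comm_semiring_1 poly"
  assumes "degree p \<le> m"
  shows "coeff (p ^ k) (k * m) = coeff p m ^ k"
proof (induction k)
  case (Suc k)
  have "degree (p ^ k) \<le> k * m"
    using assms by (metis degree_power_le le_trans mult.commute mult_le_mono2)
  then show ?case
    using coeff_mult_at_degree_bounds[OF assms, of "p ^ k" "k * m"] Suc by (simp add: add.commute)
qed simp

lemma poly_altdef_le:
  fixes p :: "'a::comm_semiring_1 poly"
  assumes "degree p \<le> n"
  shows "poly p x = (\<Sum>i\<le>n. coeff p i * x ^ i)"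
proof -
  have "poly p x = (\<Sum>i\<le>degree p. coeff p i * x ^ i)"
    by (rule poly_altdef)
  also have "\<dots> = (\<Sum>i\<le>n. coeff p i * x ^ i)"
    by (rule sum.mono_neutral_left) (use assms in \<open>auto simp: coeff_eq_0\<close>)
  finally show ?thesis .
qed

section \<open>The fraction field of \<open>F[t]\<close>\<close>

lemma poly_emb_add [simp]: "poly_emb (p + q) = poly_emb p + poly_emb q"
  by (simp add: poly_emb_def)

lemma poly_emb_mult [simp]: "poly_emb (p * q) = poly_emb p * poly_emb q"
  by (simp add: poly_emb_def)

lemma poly_emb_0 [simp]: "poly_emb 0 = 0"
  by (simp add: poly_emb_def fract_collapse)

lemma poly_emb_1 [simp]: "poly_emb 1 = 1"
  by (simp add: poly_emb_def fract_collapse)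

lemma poly_emb_power [simp]: "poly_emb (p ^ n) = poly_emb p ^ n"
  by (induct n) simp_all

lemma poly_emb_sum: "poly_emb (\<Sum>i\<in>A. f i) = (\<Sum>i\<in>A. poly_emb (f i))"
  by (induct A rule: infinite_finite_induct) simp_all

lemma poly_emb_eq_iff [simp]: "poly_emb p = poly_emb q \<longleftrightarrow> p = q"
  by (simp add: poly_emb_def eq_fract)

lemma poly_emb_eq_0_iff [simp]: "poly_emb p = 0 \<longleftrightarrow> p = 0"
  using poly_emb_eq_iff[of p 0] by simp

lemma Fract_eq_divide: "b \<noteq> 0 \<Longrightarrow> Fract a b = poly_emb a / poly_emb b"
  by (simp add: poly_emb_def)

definition fract_const :: "'a::idom \<Rightarrow> 'a poly fract" where
  "fract_const c = poly_emb [:c:]"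

lemma fract_const_add [simp]: "fract_const (a + b) = fract_const a + fract_const b"
  by (simp add: fract_const_def flip: poly_emb_add)

lemma fract_const_mult [simp]: "fract_const (a * b) = fract_const a * fract_const b"
  by (simp add: fract_const_def flip: poly_emb_mult)

lemma fract_const_0 [simp]: "fract_const 0 = 0"
  by (simp add: fract_const_def)

lemma fract_const_1 [simp]: "fract_const 1 = 1"
  unfolding fract_const_def one_pCons[symmetric] by simp

lemma fract_const_eq_iff [simp]: "fract_const a = fract_const b \<longleftrightarrow> a = b"
  by (simp add: fract_const_def)

lemma fract_const_eq_0_iff [simp]: "fract_const a = 0 \<longleftrightarrow> a = 0"
  using fract_const_eq_iff[of a 0] by simp

lemma fract_const_power [simp]: "fract_const (a ^ n) = fract_const a ^ n"
  by (induct n) simp_all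

lemma fract_const_divide: "fract_const (a / b) = fract_const a / fract_const (b :: 'a::field)"
  by (cases "b = 0") (simp_all add: field_simps flip: fract_const_mult)

lemma fract_const_mult_poly_emb: "fract_const c * poly_emb p = poly_emb (smult c p)"
  by (simp add: fract_const_def flip: poly_emb_mult)

definition poly_fract :: "'a::idom poly \<Rightarrow> 'a poly fract \<Rightarrow> 'a poly fract" where
  "poly_fract p x = poly (map_poly fract_const p) x"

lemma transcendental_Fq_iff:
  "transcendental_Fq x \<longleftrightarrow> (\<forall>p. p \<noteq> 0 \<longrightarrow> poly_fract p x \<noteq> 0)"
  by (simp add: transcendental_Fq_def poly_fract_def fract_const_def[abs_def])

lemma poly_fract_0 [simp]: "poly_fract 0 x = 0"
  by (simp add: poly_fract_def)

lemma poly_fract_pCons [simp]: "poly_fract (pCons a p) x = fract_const a + x * poly_fract p x"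
  by (simp add: poly_fract_def map_poly_pCons)

lemma poly_fract_1 [simp]: "poly_fract 1 x = 1"
  by (simp add: poly_fract_def)

lemma poly_fract_add [simp]: "poly_fract (p + q) x = poly_fract p x + poly_fract q x"
  by (induct p arbitrary: q; case_tac q) (simp_all add: algebra_simps)

lemma poly_fract_smult [simp]: "poly_fract (smult c p) x = fract_const c * poly_fract p x"
  by (induct p) (simp_all add: algebra_simps)

lemma poly_fract_mult [simp]: "poly_fract (p * q) x = poly_fract p x * poly_fract q x"
  by (induct p) (simp_all add: algebra_simps)

lemma poly_fract_altdef:
  assumes "degree p \<le> n"
  shows "poly_fract p x = (\<Sum>i\<le>n. fract_const (coeff p i) * x ^ i)"
proof -
  have "degree (map_poly fract_const p) \<le> n"
    using assms map_poly_degree_leq order_trans by blast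
  then show ?thesis
    by (simp add: poly_fract_def poly_altdef_le coeff_map_poly)
qed

lemma poly_emb_eq_poly_fract: "poly_emb p = poly_fract p (poly_emb [:0, 1:])"
proof (induct p)
  case (pCons a p)
  have "pCons a p = [:a:] + [:0, 1:] * p"
    by simp
  then show ?case
    by (metis pCons.hyps poly_emb_add poly_emb_mult poly_fract_pCons fract_const_def)
qed simp

lemma Fract_coprime_cases:
  fixes z :: "'a::field poly fract"
  obtains a b where "z = Fract a b" "b \<noteq> 0" "coprime a b"
proof -
  obtain a0 b0 where z: "z = Fract a0 b0" "b0 \<noteq> 0"
    by (cases z)
  from z(2) obtain c a b where "a0 = c * a" "b0 = c * b" "coprime a b"
    by (rule poly_common_factor)
  with z show ?thesis
    using that[of a b] by (auto simp: mult_fract_cancel)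
qed

lemma fract_const_if_power_eq_1:
  fixes z :: "'a::field poly fract"
  assumes "z ^ k = 1" "k > 0"
  obtains c where "z = fract_const c"
proof -
  obtain a b where ab: "z = Fract a b" "b \<noteq> 0" "coprime a b"
    by (rule Fract_coprime_cases)
  then have "poly_emb (a ^ k) = poly_emb (b ^ k)"
    using assms(1) by (simp add: Fract_eq_divide power_divide)
  then have akbk: "a ^ k = b ^ k"
    by (simp only: poly_emb_eq_iff)
  have "a dvd b ^ k" "b dvd a ^ k"
    using assms(2) akbk by (metis dvd_power dvd_refl)+
  then have "is_unit a" "is_unit b"
    using ab(3) coprime_dvd_power_imp_unit coprime_commute by blast+
  then obtain c1 c2 where "a = [:c1:]" "b = [:c2:]"
    by (auto simp: is_unit_poly_iff)
  then have "z = fract_const c1 / fract_const c2"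
    using ab by (simp add: Fract_eq_divide fract_const_def)
  then have "z = fract_const (c1 / c2)"
    by (simp add: fract_const_divide)
  then show ?thesis
    by (rule that)
qed

section \<open>Homogenisation and generators of \<open>F(t)\<close>\<close>

definition homog :: "nat \<Rightarrow> 'a::comm_ring_1 poly \<Rightarrow> 'a poly \<Rightarrow> 'a poly \<Rightarrow> 'a poly" where
  "homog N P a b = (\<Sum>i\<le>N. smult (coeff P i) (a ^ i * b ^ (N - i)))"

lemma poly_emb_homog:
  assumes "b \<noteq> 0" "degree P \<le> N"
  shows "poly_emb (homog N P a b) = poly_fract P (Fract a b) * poly_emb b ^ N"
proof -
  have "poly_fract P (Fract a b) * poly_emb b ^ N
      = (\<Sum>i\<le>N. fract_const (coeff P i) * (poly_emb a / poly_emb b) ^ i * poly_emb b ^ N)"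
    by (simp add: poly_fract_altdef[OF assms(2)] sum_distrib_right Fract_eq_divide assms(1))
  also have "\<dots> = (\<Sum>i\<le>N. poly_emb (smult (coeff P i) (a ^ i * b ^ (N - i))))"
  proof (rule sum.cong[OF refl])
    fix i assume "i \<in> {..N}"
    then have "poly_emb b ^ N = poly_emb b ^ i * poly_emb b ^ (N - i)"
      by (simp flip: power_add)
    then show "fract_const (coeff P i) * (poly_emb a / poly_emb b) ^ i * poly_emb b ^ N
        = poly_emb (smult (coeff P i) (a ^ i * b ^ (N - i)))"
      using assms(1) by (simp add: power_divide field_simps flip: fract_const_mult_poly_emb)
  qed
  finally show ?thesis
    by (simp add: homog_def poly_emb_sum)
qed

lemma homog_bezout:
  fixes a b :: "'a::idom poly"
  assumes "U * G + V * H = 1" "b \<noteq> 0"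
    and "degree G \<le> N" "degree H \<le> N" "degree U \<le> M" "degree V \<le> M"
  shows "homog M U a b * homog N G a b + homog M V a b * homog N H a b = b ^ (M + N)"
proof -
  let ?s = "Fract a b"
  have "poly_emb (homog M U a b * homog N G a b + homog M V a b * homog N H a b)
      = (poly_fract U ?s * poly_fract G ?s + poly_fract V ?s * poly_fract H ?s) * poly_emb b ^ (M + N)"
    using assms by (simp add: poly_emb_homog power_add algebra_simps)
  also have "poly_fract U ?s * poly_fract G ?s + poly_fract V ?s * poly_fract H ?s = 1"
    using arg_cong[OF assms(1), of "\<lambda>p. poly_fract p ?s"] by simp
  finally have "poly_emb (homog M U a b * homog N G a b + homog M V a b * homog N H a b)
      = poly_emb (b ^ (M + N))"
    by (simp only: mult_1 poly_emb_power)
  then show ?thesis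
    by (simp only: poly_emb_eq_iff)
qed

lemma homog_cong_lead: "b dvd homog N P a b - smult (coeff P N) (a ^ N)"
proof -
  have "homog N P a b - smult (coeff P N) (a ^ N) = (\<Sum>i<N. smult (coeff P i) (a ^ i * b ^ (N - i)))"
    by (simp add: homog_def lessThan_Suc_atMost[symmetric])
  moreover have "b dvd smult (coeff P i) (a ^ i * b ^ (N - i))" if "i < N" for i
    using that by (intro dvd_smult dvd_mult) (simp add: dvd_power)
  ultimately show ?thesis
    by (auto intro!: dvd_sum)
qed

lemma coeff_homog_top:
  assumes "degree a \<le> d" "degree b \<le> d"
  shows "coeff (homog N P a b) (N * d) = (\<Sum>i\<le>N. coeff P i * coeff a d ^ i * coeff b d ^ (N - i))"
proof -
  have "coeff (a ^ i * b ^ (N - i)) (N * d) = coeff a d ^ i * coeff b d ^ (N - i)" if "i \<le> N" for i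
  proof -
    have "N * d = i * d + (N - i) * d"
      using that by (simp flip: add_mult_distrib)
    moreover have "degree (a ^ i) \<le> i * d" "degree (b ^ (N - i)) \<le> (N - i) * d"
      using assms by (metis degree_power_le le_trans mult.commute mult_le_mono2)+
    ultimately show ?thesis
      using assms by (simp add: coeff_mult_at_degree_bounds coeff_power_at_degree_bound)
  qed
  then show ?thesis
    by (simp add: homog_def coeff_sum mult.assoc)
qed

lemma coprime_coeff_max_degree:
  fixes G H :: "'a::field poly"
  assumes "coprime G H"
  shows "coeff G (max (degree G) (degree H)) \<noteq> 0 \<or> coeff H (max (degree G) (degree H)) \<noteq> 0"
  using assms by (cases "degree G \<le> degree H") (auto simp: max_def coeff_eq_0 is_unit_poly_iff)

lemma coprime_homog_form_nonzero:
  fixes G H :: "'a::field poly"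
  assumes "coprime G H" "N = max (degree G) (degree H)" "u \<noteq> 0 \<or> v \<noteq> 0"
  shows "\<exists>P\<in>{G, H}. (\<Sum>i\<le>N. coeff P i * u ^ i * v ^ (N - i)) \<noteq> 0"
proof (cases "v = 0")
  case True
  have "(\<Sum>i\<le>N. coeff P i * u ^ i * v ^ (N - i)) = coeff P N * u ^ N" for P
    using True by (subst sum.remove[of _ N]) (auto intro!: sum.neutral simp: power_0_left)
  then show ?thesis
    using True assms coprime_coeff_max_degree[OF assms(1)] by auto
next
  case False
  have "(\<Sum>i\<le>N. coeff P i * u ^ i * v ^ (N - i)) = v ^ N * poly P (u / v)"
    if "degree P \<le> N" for P
    using False
    by (simp add: poly_altdef_le[OF that] sum_distrib_left power_divide power_diff field_simps)
  then show ?thesis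
    using coprime_poly_0[OF assms(1), of "u / v"] False assms(2) by auto
qed

lemma homog_degree_ge:
  fixes G H a b :: "'a::field poly"
  assumes "coprime G H" "N = max (degree G) (degree H)" "b \<noteq> 0"
  shows "N * max (degree a) (degree b) \<le> max (degree (homog N G a b)) (degree (homog N H a b))"
proof -
  define d where "d = max (degree a) (degree b)"
  have "coeff a d \<noteq> 0 \<or> coeff b d \<noteq> 0"
    using assms(3) by (cases "degree a \<le> degree b") (auto simp: d_def max_def)
  then obtain P where "P \<in> {G, H}" "(\<Sum>i\<le>N. coeff P i * coeff a d ^ i * coeff b d ^ (N - i)) \<noteq> 0"
    using coprime_homog_form_nonzero[OF assms(1,2)] by blast
  then have "P \<in> {G, H}" "coeff (homog N P a b) (N * d) \<noteq> 0"
    by (simp_all add: coeff_homog_top d_def)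
  then show ?thesis
    unfolding d_def[symmetric] by (auto dest: le_degree)
qed

definition linear_fractions :: "'a::idom poly fract set" where
  "linear_fractions = {Fract p q | p q. degree p \<le> 1 \<and> degree q \<le> 1}"

lemma finite_linear_fractions: "finite (linear_fractions :: 'a::{idom,finite} poly fract set)"
proof -
  have "{p :: 'a poly. degree p \<le> 1} \<subseteq> (\<lambda>(u, v). [:u, v:]) ` UNIV"
  proof
    fix p :: "'a poly" assume "p \<in> {p. degree p \<le> 1}"
    then have "p = [:coeff p 0, coeff p 1:]"
      by (intro poly_eqI) (auto simp: coeff_pCons coeff_eq_0 split: nat.split)
    then show "p \<in> (\<lambda>(u, v). [:u, v:]) ` UNIV"
      by (auto intro: image_eqI[of _ _ "(coeff p 0, coeff p 1)"])
  qed
  then have "finite {p :: 'a poly. degree p \<le> 1}"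
    by (rule finite_subset) simp
  moreover have "(linear_fractions :: 'a poly fract set) = (\<lambda>(p, q). Fract p q) ` ({p. degree p \<le> 1} \<times> {q. degree q \<le> 1})"
    by (auto simp: linear_fractions_def)
  ultimately show ?thesis
    by (metis finite_imageI finite_cartesian_product)
qed

lemma unit_homog_if_dvd:
  fixes G H a b :: "'a::field poly"
  assumes ab: "coprime a b" "b \<noteq> 0" and GH: "coprime G H"
    and N: "N = max (degree G) (degree H)"
    and dvd: "homog N G a b dvd homog N H a b"
  shows "is_unit (homog N G a b)"
proof -
  let ?Gh = "homog N G a b" and ?Hh = "homog N H a b"
  have "coprime ?Gh b"
  proof (rule coprimeI)
    fix c assume c: "c dvd ?Gh" "c dvd b"
    have "c dvd ?Gh - smult (coeff G N) (a ^ N)" "c dvd ?Hh - smult (coeff H N) (a ^ N)"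
      using c(2) homog_cong_lead by (rule dvd_trans)+
    then have "c dvd smult (coeff G N) (a ^ N)" "c dvd smult (coeff H N) (a ^ N)"
      using dvd_diff[OF c(1)] dvd_diff[OF dvd_trans[OF c(1) dvd]] by fastforce+
    then have "c dvd a ^ N"
      using coprime_coeff_max_degree[OF GH] by (auto simp: N dvd_smult_cancel)
    moreover have "coprime c a"
      using coprime_divisors[OF c(2) dvd_refl] ab(1) by (simp add: coprime_commute)
    ultimately show "is_unit c"
      by (rule coprime_dvd_power_imp_unit[rotated])
  qed
  obtain U V where UV: "U * G + V * H = 1"
    using euclidean_ring_bezout[OF GH] by blast
  define M where "M = max (degree U) (degree V)"
  have "homog M U a b * ?Gh + homog M V a b * ?Hh = b ^ (M + N)"
    by (rule homog_bezout[OF UV ab(2)]) (simp_all add: M_def N)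
  moreover have "?Gh dvd homog M U a b * ?Gh + homog M V a b * ?Hh"
    using dvd by (intro dvd_add dvd_mult dvd_refl)
  ultimately have "?Gh dvd b ^ (M + N)"
    by simp
  then show ?thesis
    by (rule coprime_dvd_power_imp_unit[OF \<open>coprime ?Gh b\<close>])
qed

text \<open>
  With \<open>s = a/b\<close>, clearing denominators turns \<open>t G(s) = H(s)\<close> into \<open>t G\<^sub>h = H\<^sub>h\<close> between
  homogenisations; \<open>G\<^sub>h\<close> is then a unit, so \<open>H\<^sub>h\<close> has degree 1, which bounds the degrees
  of \<open>a\<close> and \<open>b\<close>.
\<close>

lemma linear_fraction_if_generates_coprime:
  fixes s :: "'a::field poly fract" and G H :: "'a poly"
  assumes GH: "coprime G H"
    and s: "poly_fract G s \<noteq> 0" "poly_emb [:0, 1:] * poly_fract G s = poly_fract H s"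
  shows "s \<in> linear_fractions"
proof -
  obtain a b where ab: "s = Fract a b" "b \<noteq> 0" "coprime a b"
    by (rule Fract_coprime_cases)
  define N where "N = max (degree G) (degree H)"
  define Gh Hh where "Gh = homog N G a b" and "Hh = homog N H a b"
  have emb: "poly_emb Gh = poly_fract G s * poly_emb b ^ N" "poly_emb Hh = poly_fract H s * poly_emb b ^ N"
    unfolding Gh_def Hh_def ab(1) using ab(2) by (simp_all add: poly_emb_homog N_def)
  then have "poly_emb ([:0, 1:] * Gh) = poly_emb Hh"
    unfolding poly_emb_mult by (simp only: mult.assoc[symmetric] s(2))
  then have rel: "[:0, 1:] * Gh = Hh"
    by (simp only: poly_emb_eq_iff)
  have "Gh dvd Hh"
    unfolding rel[symmetric] by (rule dvd_triv_right)
  then have "is_unit Gh"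
    unfolding Gh_def Hh_def using ab(3,2) GH N_def by (intro unit_homog_if_dvd)
  moreover have "Gh \<noteq> 0"
    using emb(1) s(1) ab(2) by auto
  ultimately have deg: "degree Gh = 0" "degree Hh = 1"
    unfolding rel[symmetric] by (simp_all add: is_unit_iff_degree degree_mult_eq)
  have "N \<noteq> 0"
  proof
    assume "N = 0"
    then have "Hh = [:coeff H 0:]"
      by (simp add: Hh_def homog_def)
    with deg(2) show False
      by simp
  qed
  moreover have "N * max (degree a) (degree b) \<le> 1"
    using homog_degree_ge[OF GH N_def ab(2), of a] deg by (simp add: Gh_def Hh_def)
  ultimately have "degree a \<le> 1" "degree b \<le> 1"
    by (cases N; simp)+
  then show ?thesis
    using ab(1) by (auto simp: linear_fractions_def)
qed

lemma linear_fraction_if_generates: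
  fixes s :: "'a::field poly fract" and G H :: "'a poly"
  assumes s: "poly_fract G s \<noteq> 0" "poly_emb [:0, 1:] * poly_fract G s = poly_fract H s"
  shows "s \<in> linear_fractions"
proof -
  have "G \<noteq> 0"
    using s(1) by auto
  then obtain c H' G' where GH: "H = c * H'" "G = c * G'" "coprime H' G'"
    by (rule poly_common_factor)
  have "poly_fract c s \<noteq> 0" "poly_fract G' s \<noteq> 0"
    using s(1) by (simp_all add: GH)
  moreover have "poly_fract c s * (poly_emb [:0, 1:] * poly_fract G' s) = poly_fract c s * poly_fract H' s"
    using s(2) by (simp add: GH algebra_simps)
  ultimately show ?thesis
    using GH(3) by (intro linear_fraction_if_generates_coprime[of G' H']) (simp_all add: coprime_commute)
qed

section \<open>The rings \<open>F[t, 1/D]\<close>\<close>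

lemma transcendental_if_nonunit:
  fixes x :: "'a::field poly fract"
  assumes S: "subring S" "\<And>c. fract_const c \<in> S"
    and x: "x \<in> S" "x \<noteq> 0" "\<not> unit_in S x"
  shows "transcendental_Fq x"
  unfolding transcendental_Fq_iff
proof (intro allI impI)
  interpret subring S by (fact S(1))
  have poly_fract_mem: "poly_fract p x \<in> S" for p
    by (induct p) (auto intro: zero_mem add_mem mult_mem S(2) x(1))
  fix p :: "'a poly"
  show "p \<noteq> 0 \<Longrightarrow> poly_fract p x \<noteq> 0"
  proof (induct p)
    case (pCons a p)
    show ?case
    proof (cases "a = 0")
      case True
      then show ?thesis
        using pCons x(2) by auto
    next
      case False
      show ?thesis
      proof
        assume "poly_fract (pCons a p) x = 0"
        then have "x * poly_fract p x = - fract_const a"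
          by (simp add: add_eq_0_iff)
        then have "x * (- poly_fract p x * fract_const (1 / a)) = fract_const a * fract_const (1 / a)"
          by (simp flip: mult.assoc)
        also have "\<dots> = 1"
          using False by (simp flip: fract_const_mult)
        finally have "unit_in S x"
          unfolding unit_in_def using poly_fract_mem S(2) by (blast intro: mult_mem uminus_mem)
        with x(3) show False ..
      qed
    qed
  qed simp
qed

lemma power_eq_1_finite_field:
  fixes c :: "'a::{field,finite}"
  assumes "c \<noteq> 0"
  obtains k where "k > 0" "c ^ k = 1"
proof -
  have "\<not> inj (\<lambda>n::nat. c ^ n)"
  proof
    assume "inj (\<lambda>n::nat. c ^ n)"
    then have "finite (UNIV :: nat set)"
      by (rule finite_imageD[OF finite_subset[OF subset_UNIV finite_UNIV]])
    then show False
      by simp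
  qed
  then obtain i j :: nat where "i < j" "c ^ i = c ^ j"
    by (metis injI linorder_neqE_nat)
  moreover have "c ^ j = c ^ i * c ^ (j - i)"
    using \<open>i < j\<close> by (simp flip: power_add)
  ultimately have "c ^ i * c ^ (j - i) = c ^ i * 1"
    by simp
  then show ?thesis
    using that[of "j - i"] \<open>i < j\<close> assms by simp
qed

lemma ring_aut_on_fract_const:
  fixes S :: "'a::{field,finite} poly fract set"
  assumes S: "subring S" "\<And>c. fract_const c \<in> S" and \<sigma>: "ring_aut_on S \<sigma>"
  obtains c' where "\<sigma> (fract_const c) = fract_const c'"
proof (cases "c = 0")
  case True
  then show ?thesis
    using that[of 0] subring.ring_aut_on_0[OF S(1) \<sigma>] by simp
next
  case False
  then obtain k where k: "k > 0" "c ^ k = 1"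
    by (rule power_eq_1_finite_field)
  have "\<sigma> (fract_const c) ^ k = \<sigma> (fract_const (c ^ k))"
    using subring.ring_aut_on_power[OF S(1) \<sigma> S(2)] by simp
  also have "\<dots> = 1"
    using k(2) ring_aut_on_1[OF \<sigma>] by simp
  finally show ?thesis
    using k(1) that fract_const_if_power_eq_1 by blast
qed

lemma ring_aut_on_poly_fract:
  fixes S :: "'a::field poly fract set"
  assumes S: "subring S" "\<And>c. fract_const c \<in> S" and \<sigma>: "ring_aut_on S \<sigma>"
    and \<phi>: "\<And>c. \<sigma> (fract_const c) = fract_const (\<phi> c)" and "x \<in> S"
  shows "\<sigma> (poly_fract p x) = poly_fract (map_poly \<phi> p) (\<sigma> x)"
proof -
  interpret subring S by (fact S(1))
  have "fract_const (\<phi> 0) = 0"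
    using \<phi>[of 0] ring_aut_on_0[OF \<sigma>] by simp
  then have "\<phi> 0 = 0"
    by simp
  have poly_fract_mem: "poly_fract p x \<in> S" for p
    by (induct p) (auto intro: zero_mem add_mem mult_mem S(2) \<open>x \<in> S\<close>)
  show ?thesis
  proof (induct p)
    case (pCons a p)
    then show ?case
      using \<open>\<phi> 0 = 0\<close> \<open>x \<in> S\<close> S(2) poly_fract_mem
      by (simp add: map_poly_pCons ring_aut_on_add[OF \<sigma>] ring_aut_on_mult[OF \<sigma>] \<phi> mult_mem)
  qed (simp add: ring_aut_on_0[OF \<sigma>])
qed

definition poly_away :: "'a::idom poly \<Rightarrow> 'a poly fract set" where
  "poly_away D = {Fract p (D ^ n) | p n. True}"

lemma poly_ring_eq_poly_away: "poly_ring = poly_away 1"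
  by (simp add: poly_ring_def poly_away_def poly_emb_def)

lemma loc_ring_eq_poly_away: "loc_ring f m = poly_away (\<Prod>i<m. f i)"
  by (simp add: loc_ring_def poly_away_def)

lemma poly_ring_or_loc_ring_eq_poly_away:
  assumes "R = poly_ring \<or> R = loc_ring f m" and "\<And>i. i < m \<Longrightarrow> f i \<noteq> 0"
  obtains D where "D \<noteq> 0" "R = poly_away D"
proof (cases "R = poly_ring")
  case True
  then show ?thesis
    using that[of 1] by (simp add: poly_ring_eq_poly_away)
next
  case False
  then show ?thesis
    using that[of "\<Prod>i<m. f i"] assms by (simp add: loc_ring_eq_poly_away)
qed

lemma poly_emb_mem_poly_away: "poly_emb p \<in> poly_away D"
  unfolding poly_away_def poly_emb_def by (rule CollectI, rule exI[of _ p], rule exI[of _ 0]) simp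

lemma fract_const_mem_poly_away: "fract_const c \<in> poly_away D"
  by (simp add: fract_const_def poly_emb_mem_poly_away)

lemma subring_poly_away:
  assumes "D \<noteq> 0"
  shows "subring (poly_away D)"
proof
  show "0 \<in> poly_away D" "1 \<in> poly_away D"
    using poly_emb_mem_poly_away[of 0 D] poly_emb_mem_poly_away[of 1 D] by simp_all
  fix a b assume "a \<in> poly_away D" "b \<in> poly_away D"
  then obtain p n q k where ab: "a = Fract p (D ^ n)" "b = Fract q (D ^ k)"
    by (auto simp: poly_away_def)
  have "a + b = Fract (p * D ^ k + q * D ^ n) (D ^ (n + k))"
    "a * b = Fract (p * q) (D ^ (n + k))" "- a = Fract (- p) (D ^ n)"
    using assms by (simp_all add: ab power_add mult.commute)
  then show "a + b \<in> poly_away D" "a * b \<in> poly_away D" "- a \<in> poly_away D"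
    by (auto simp: poly_away_def)
qed

lemma ring_aut_on_poly_away_var_in_linear_fractions:
  fixes D :: "'a::{field,finite} poly"
  assumes "D \<noteq> 0" and \<sigma>: "ring_aut_on (poly_away D) \<sigma>"
    and \<phi>: "\<And>c. \<sigma> (fract_const c) = fract_const (\<phi> c)"
  shows "\<sigma> (poly_emb [:0, 1:]) \<in> linear_fractions"
proof -
  let ?t = "poly_emb [:0, 1:] :: 'a poly fract"
  interpret subring "poly_away D"
    using \<open>D \<noteq> 0\<close> by (rule subring_poly_away)
  have \<sigma>_poly_emb: "\<sigma> (poly_emb p) = poly_fract (map_poly \<phi> p) (\<sigma> ?t)" for p
    unfolding poly_emb_eq_poly_fract[of p]
    by (rule ring_aut_on_poly_fract[OF subring_axioms fract_const_mem_poly_away \<sigma> \<phi> poly_emb_mem_poly_away])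
  have "?t \<in> \<sigma> ` poly_away D"
    unfolding ring_aut_on_image[OF \<sigma>] by (rule poly_emb_mem_poly_away)
  then obtain w where w: "w \<in> poly_away D" "\<sigma> w = ?t"
    by (auto simp del: poly_emb_eq_iff)
  then obtain g n where "w = Fract g (D ^ n)"
    by (auto simp: poly_away_def)
  then have "w * poly_emb (D ^ n) = poly_emb g"
    using \<open>D \<noteq> 0\<close> by (simp add: poly_emb_def eq_fract)
  then have "\<sigma> (w * poly_emb (D ^ n)) = \<sigma> (poly_emb g)"
    by (rule arg_cong)
  then have "?t * \<sigma> (poly_emb (D ^ n)) = \<sigma> (poly_emb g)"
    unfolding ring_aut_on_mult[OF \<sigma> w(1) poly_emb_mem_poly_away] w(2) .
  moreover have "\<sigma> (poly_emb (D ^ n)) \<noteq> \<sigma> 0"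
    using \<open>D \<noteq> 0\<close> inj_onD[OF ring_aut_on_inj[OF \<sigma>] _ poly_emb_mem_poly_away zero_mem, of "D ^ n"]
    by auto
  then have "\<sigma> (poly_emb (D ^ n)) \<noteq> 0"
    by (simp add: ring_aut_on_0[OF \<sigma>])
  ultimately show ?thesis
    unfolding \<sigma>_poly_emb[of "D ^ n"] \<sigma>_poly_emb[of g] by (rule linear_fraction_if_generates[rotated])
qed

lemma finite_aut_orbit_poly_away:
  fixes D :: "'a::{field,finite} poly"
  assumes "D \<noteq> 0"
  shows "finite (aut_orbit (poly_away D) (poly_emb g))"
proof -
  let ?t = "poly_emb [:0, 1:] :: 'a poly fract"
  have "aut_orbit (poly_away D) (poly_emb g)
      \<subseteq> (\<lambda>(\<phi>, s). poly_fract (map_poly \<phi> g) s) ` (UNIV \<times> linear_fractions)"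
  proof
    fix z assume "z \<in> aut_orbit (poly_away D) (poly_emb g)"
    then obtain \<sigma> where \<sigma>: "ring_aut_on (poly_away D) \<sigma>" "z = \<sigma> (poly_emb g)"
      by (auto simp: aut_orbit_def)
    have S: "subring (poly_away D)"
      using assms by (rule subring_poly_away)
    have "\<forall>c. \<exists>c'. \<sigma> (fract_const c) = fract_const c'"
      using ring_aut_on_fract_const[OF S fract_const_mem_poly_away \<sigma>(1)] by blast
    then obtain \<phi> where \<phi>: "\<And>c. \<sigma> (fract_const c) = fract_const (\<phi> c)"
      by metis
    have "z = poly_fract (map_poly \<phi> g) (\<sigma> ?t)"
      unfolding \<sigma>(2) poly_emb_eq_poly_fract[of g]
      by (rule ring_aut_on_poly_fract[OF S fract_const_mem_poly_away \<sigma>(1) \<phi> poly_emb_mem_poly_away])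
    moreover have "\<sigma> ?t \<in> linear_fractions"
      using assms \<sigma>(1) \<phi> by (rule ring_aut_on_poly_away_var_in_linear_fractions)
    ultimately show "z \<in> (\<lambda>(\<phi>, s). poly_fract (map_poly \<phi> g) s) ` (UNIV \<times> linear_fractions)"
      by auto
  qed
  then show ?thesis
    by (rule finite_subset) (simp add: finite_linear_fractions)
qed

lemma degree_var_mult_plus_1:
  fixes D :: "'a::idom poly"
  assumes "D \<noteq> 0"
  shows "degree ([:0, 1:] * D + 1) = Suc (degree D)"
  using assms by (subst degree_add_eq_left) (simp_all add: degree_mult_eq)

lemma not_unit_in_poly_away_var_mult_plus_1:
  fixes D :: "'a::field poly"
  assumes "D \<noteq> 0"
  shows "\<not> unit_in (poly_away D) (poly_emb ([:0, 1:] * D + 1))"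
proof
  define y where "y = [:0, 1:] * D + 1"
  assume "unit_in (poly_away D) (poly_emb ([:0, 1:] * D + 1))"
  then obtain p n where "poly_emb y * Fract p (D ^ n) = 1"
    by (auto simp: unit_in_def poly_away_def y_def)
  then have "y * p = D ^ n"
    using assms by (simp add: poly_emb_def eq_fract One_fract_def)
  then have "y dvd D ^ n"
    by (metis dvdI)
  moreover have "coprime y D"
  proof (rule coprimeI)
    fix c assume "c dvd y" "c dvd D"
    then have "c dvd y - [:0, 1:] * D"
      by (intro dvd_diff dvd_mult)
    then show "is_unit c"
      by (simp add: y_def)
  qed
  ultimately have "is_unit y"
    using coprime_dvd_power_imp_unit by blast
  moreover have "degree y = Suc (degree D)"
    unfolding y_def using assms by (rule degree_var_mult_plus_1)
  ultimately show False
    using is_unit_iff_degree[of y] by (cases "y = 0") auto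
qed

theorem mainTheorem8:
  fixes f :: "nat \<Rightarrow> 'a::{field,finite} poly" and m :: nat
    and R :: "'a poly fract set"
  assumes "m \<ge> 1"
    and "\<And>i. i < m \<Longrightarrow> lead_coeff (f i) = 1 \<and> irreducible (f i)"
    and "\<And>i j. i < m \<Longrightarrow> j < m \<Longrightarrow> i \<noteq> j \<Longrightarrow> coprime (f i) (f j)"
    and "R = poly_ring \<or> R = loc_ring f m"
  shows "\<exists>x\<in>R. \<not> unit_in R x \<and> transcendental_Fq x \<and>
           (\<forall>\<sigma>. ring_aut_on R \<sigma> \<longrightarrow> \<sigma> x = x)"
proof -
  have "f i \<noteq> 0" if "i < m" for i
    using assms(2)[OF that] by auto
  with assms(4) obtain D where D: "D \<noteq> 0" "R = poly_away D"
    by (rule poly_ring_or_loc_ring_eq_poly_away)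
  define y where "y = poly_emb ([:0, 1:] * D + 1)"
  have "y \<noteq> 0"
    unfolding y_def poly_emb_eq_0_iff using degree_var_mult_plus_1[OF D(1)]
    by (metis degree_0 nat.simps(3))
  moreover have "y \<in> R"
    unfolding y_def D(2) by (rule poly_emb_mem_poly_away)
  moreover have "\<not> unit_in R y"
    unfolding y_def D(2) using D(1) by (rule not_unit_in_poly_away_var_mult_plus_1)
  moreover have "finite (aut_orbit R y)"
    unfolding y_def D(2) using D(1) by (rule finite_aut_orbit_poly_away)
  ultimately obtain x where x: "x \<in> R" "x \<noteq> 0" "\<not> unit_in R x" "\<And>\<sigma>. ring_aut_on R \<sigma> \<Longrightarrow> \<sigma> x = x"
    using subring.fixed_nonunit_if_finite_aut_orbit[OF subring_poly_away[OF D(1)]] D(2) by blast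
  moreover have "transcendental_Fq x"
    using subring_poly_away[OF D(1)] fract_const_mem_poly_away x(1-3) unfolding D(2)
    by (rule transcendental_if_nonunit)
  ultimately show ?thesis
    by blast
qed

end
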